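(* Let $M$ be a monoid, $\phi:M\to M$ an endomorphism, and $z\in M$ such that the elements $z\phi^n$ ($n\in\mathbb{N}\cup\{0\}$) are pairwise distinct. Let $\beta,\beta',\delta,\delta'\in\mathbb{N}\cup\{0\}$. Then there exist $\alpha,\alpha',\gamma,\gamma'\in\mathbb{N}\cup\{0\}$ such that $c^\gamma b^\beta z c^\delta b^\alpha = c^{\gamma'} b^{\beta'} z c^{\delta'} b^{\alpha'}$ in $\mathrm{BR}(M,\phi)$ if and only if $\max\{\beta,\delta\}=\max\{\beta',\delta'\}$.
   Context: If $M$ has monoid presentation $\langle A\mid \mathcal{R}\rangle$ ($A$ possibly infinite) and $\phi$ is an endomorphism of $M$ (maps written on the right), the Bruck--Reilly extension $\mathrm{BR}(M,\phi)$ is the monoid presented by $\langle A,b,c\mid \mathcal{R},\ bc=1,\ ba=(a\phi)b,\ ac=c(a\phi)\ (a\in A)\rangle$ (with $a\phi$ written as a word over $A$); it does not depend on the choice of presentation, and $M$ embeds in it. *)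

theory Defs
  imports Main
begin

text \<open>Generators of the Bruck--Reilly extension BR(M,phi): we present M by the
  presentation with generating set A = M (all elements) and its multiplication
  table as relations, and add the two extra generators b and c.\<close>

datatype 'a br_gen = G 'a | B | C

inductive br_cong :: "('a::monoid_mult \<Rightarrow> 'a) \<Rightarrow> 'a br_gen list \<Rightarrow> 'a br_gen list \<Rightarrow> bool"
  for phi :: "'a::monoid_mult \<Rightarrow> 'a" where
  refl: "br_cong phi w w"
| sym: "br_cong phi u v \<Longrightarrow> br_cong phi v u"
| trans: "br_cong phi u v \<Longrightarrow> br_cong phi v w \<Longrightarrow> br_cong phi u w"
| ctx: "br_cong phi u v \<Longrightarrow> br_cong phi (x @ u @ y) (x @ v @ y)"
| mult: "br_cong phi [G a, G a'] [G (a * a')]"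
| one: "br_cong phi [G 1] []"
| bc: "br_cong phi [B, C] []"
| ba: "br_cong phi [B, G a] [G (phi a), B]"
| ac: "br_cong phi [G a, C] [C, G (phi a)]"

definition monoid_endo :: "('a::monoid_mult \<Rightarrow> 'a) \<Rightarrow> bool" where
  "monoid_endo phi \<longleftrightarrow> phi 1 = 1 \<and> (\<forall>x y. phi (x * y) = phi x * phi y)"

definition br_word :: "nat \<Rightarrow> nat \<Rightarrow> 'a \<Rightarrow> nat \<Rightarrow> nat \<Rightarrow> 'a br_gen list" where
  "br_word g be z d a = replicate g C @ replicate be B @ [G z] @ replicate d C @ replicate a B"

end

theory Submission
  imports Defs
begin

text \<open>Every element of BR(M,phi) has a unique normal form c^m a b^n. Uniqueness comes from
  reading a word left to right as an action on triples (m, a, n) that respects the defining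
  relations; existence from reducing a word step by step. The word c^g b^be z c^d b^al has
  normal form c^(g + max be d - be) (z phi^(max be d)) b^(max be d - d + al). As the z phi^k
  are pairwise distinct, max be d is an invariant; conversely the choice g = be, al = d
  makes the normal form c^k (z phi^k) b^k with k = max be d.\<close>

type_synonym 'a br_nf = "nat \<times> 'a \<times> nat"

definition br_nf_word :: "'a br_nf \<Rightarrow> 'a br_gen list" where
  "br_nf_word s = (case s of (m, a, n) \<Rightarrow> replicate m C @ [G a] @ replicate n B)"

fun br_step :: "('a::monoid_mult \<Rightarrow> 'a) \<Rightarrow> 'a br_gen \<Rightarrow> 'a br_nf \<Rightarrow> 'a br_nf" where
  "br_step phi (G x) (m, a, n) = (m, a * (phi ^^ n) x, n)"
| "br_step phi B (m, a, n) = (m, a, Suc n)"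
| "br_step phi C (m, a, n) = (if n = 0 then (Suc m, phi a, 0) else (m, a, n - 1))"

definition br_eval :: "('a::monoid_mult \<Rightarrow> 'a) \<Rightarrow> 'a br_gen list \<Rightarrow> 'a br_nf \<Rightarrow> 'a br_nf" where
  "br_eval phi w s = fold (br_step phi) w s"

lemma br_eval_Nil [simp]: "br_eval phi [] s = s"
  by (simp add: br_eval_def)

lemma br_eval_Cons [simp]: "br_eval phi (x # w) s = br_eval phi w (br_step phi x s)"
  by (simp add: br_eval_def)

lemma br_eval_append [simp]: "br_eval phi (u @ v) s = br_eval phi v (br_eval phi u s)"
  by (simp add: br_eval_def)

lemma monoid_endo_funpow:
  assumes "monoid_endo phi"
  shows "monoid_endo (phi ^^ n)"
  using assms by (induction n) (auto simp: monoid_endo_def)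

lemma br_eval_cong:
  assumes "br_cong phi u v" and endo: "monoid_endo phi"
  shows "br_eval phi u s = br_eval phi v s"
  using assms(1)
proof (induction arbitrary: s rule: br_cong.induct)
  case (mult a a')
  show ?case
    using monoid_endo_funpow[OF endo] by (cases s) (auto simp: monoid_endo_def mult.assoc)
next
  case one
  show ?case
    using monoid_endo_funpow[OF endo] by (cases s) (auto simp: monoid_endo_def)
next
  case bc
  show ?case by (cases s) auto
next
  case (ba a)
  show ?case by (cases s) (simp add: funpow_swap1)
next
  case (ac a)
  obtain m x n where s: "s = (m, x, n)" by (cases s)
  show ?case
    using endo by (cases n) (auto simp: s monoid_endo_def funpow_swap1)
qed auto

lemma br_cong_append_left: "br_cong phi u v \<Longrightarrow> br_cong phi (x @ u) (x @ v)"
  using br_cong.ctx[of phi u v x "[]"] by simp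

lemma br_cong_append_right: "br_cong phi u v \<Longrightarrow> br_cong phi (u @ y) (v @ y)"
  using br_cong.ctx[of phi u v "[]" y] by simp

lemma br_cong_replicate_B_G:
  "br_cong phi (replicate n B @ [G x]) (G ((phi ^^ n) x) # replicate n B)"
proof (induction n arbitrary: x)
  case 0
  show ?case by (simp add: br_cong.refl)
next
  case (Suc n)
  have "br_cong phi (B # replicate n B @ [G x]) (B # G ((phi ^^ n) x) # replicate n B)"
    using br_cong_append_left[OF Suc, of "[B]"] by simp
  moreover have "br_cong phi (B # G ((phi ^^ n) x) # replicate n B)
                             (G ((phi ^^ Suc n) x) # B # replicate n B)"
    using br_cong_append_right[OF br_cong.ba, of phi "(phi ^^ n) x" "replicate n B"] by simp
  ultimately show ?case
    by (simp add: br_cong.trans)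
qed

lemma br_cong_nf_word_snoc:
  "br_cong phi (br_nf_word s @ [x]) (br_nf_word (br_step phi x s))"
proof -
  obtain m a n where s: "s = (m, a, n)" by (cases s)
  show ?thesis
  proof (cases x)
    case (G y)
    have "br_cong phi ((replicate m C @ [G a]) @ replicate n B @ [G y])
                      ((replicate m C @ [G a]) @ G ((phi ^^ n) y) # replicate n B)"
      by (rule br_cong_append_left[OF br_cong_replicate_B_G])
    moreover have "br_cong phi (replicate m C @ [G a, G ((phi ^^ n) y)] @ replicate n B)
                               (replicate m C @ [G (a * (phi ^^ n) y)] @ replicate n B)"
      by (rule br_cong.ctx[OF br_cong.mult])
    ultimately show ?thesis
      by (simp add: s G br_nf_word_def br_cong.trans)
  next
    case B
    then show ?thesis
      by (simp add: s br_nf_word_def replicate_append_same[symmetric] br_cong.refl)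
  next
    case C
    show ?thesis
    proof (cases n)
      case 0
      have "br_cong phi (replicate m C @ [G a, C] @ []) (replicate m C @ [C, G (phi a)] @ [])"
        by (rule br_cong.ctx[OF br_cong.ac])
      then show ?thesis
        by (simp add: s C 0 br_nf_word_def replicate_append_same[symmetric])
    next
      case (Suc k)
      have "br_cong phi ((replicate m C @ [G a] @ replicate k B) @ [B, C] @ [])
                        ((replicate m C @ [G a] @ replicate k B) @ [] @ [])"
        by (rule br_cong.ctx[OF br_cong.bc])
      then show ?thesis
        by (simp add: s C Suc br_nf_word_def replicate_append_same[symmetric])
    qed
  qed
qed

lemma br_cong_nf_word_append:
  "br_cong phi (br_nf_word s @ w) (br_nf_word (br_eval phi w s))"
proof (induction w arbitrary: s)
  case Nil
  show ?case by (simp add: br_cong.refl)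
next
  case (Cons x w)
  have "br_cong phi ((br_nf_word s @ [x]) @ w) (br_nf_word (br_step phi x s) @ w)"
    by (rule br_cong_append_right[OF br_cong_nf_word_snoc])
  with Cons.IH show ?case
    by (metis br_cong.trans append.assoc append_Cons append_Nil br_eval_Cons prod_cases3)
qed

lemma br_cong_nf_word_br_eval: "br_cong phi w (br_nf_word (br_eval phi w (0, 1, 0)))"
proof -
  have "br_cong phi ([G 1] @ w) ([] @ w)"
    by (rule br_cong_append_right[OF br_cong.one])
  then have "br_cong phi w (br_nf_word (0, 1, 0) @ w)"
    by (simp add: br_nf_word_def br_cong.sym)
  then show ?thesis
    using br_cong_nf_word_append br_cong.trans by metis
qed

theorem br_cong_iff_br_eval_eq:
  assumes "monoid_endo phi"
  shows "br_cong phi u v \<longleftrightarrow> br_eval phi u (0, 1, 0) = br_eval phi v (0, 1, 0)"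
proof
  assume "br_cong phi u v"
  then show "br_eval phi u (0, 1, 0) = br_eval phi v (0, 1, 0)"
    using assms by (rule br_eval_cong)
next
  assume "br_eval phi u (0, 1, 0) = br_eval phi v (0, 1, 0)"
  then show "br_cong phi u v"
    using br_cong_nf_word_br_eval[of phi u] br_cong_nf_word_br_eval[of phi v]
    by (metis br_cong.sym br_cong.trans)
qed

lemma br_eval_replicate_C:
  "br_eval phi (replicate k C) (m, a, n) =
     (if k \<le> n then (m, a, n - k) else (m + k - n, (phi ^^ (k - n)) a, 0))"
proof (induction k arbitrary: m a n)
  case 0
  show ?case by simp
next
  case (Suc k)
  then show ?case by (cases n) (auto simp: funpow_swap1)
qed

lemma br_eval_replicate_B: "br_eval phi (replicate k B) (m, a, n) = (m, a, n + k)"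
  by (induction k arbitrary: n) auto

lemma br_eval_br_word:
  assumes "monoid_endo phi"
  shows "br_eval phi (br_word g be z d al) (0, 1, 0) =
           (g + max be d - be, (phi ^^ max be d) z, max be d - d + al)"
proof -
  have "(phi ^^ g) 1 = 1"
    using monoid_endo_funpow[OF assms] by (simp add: monoid_endo_def)
  then have "br_eval phi (replicate g C @ replicate be B @ [G z]) (0, 1, 0) =
               (g, (phi ^^ be) z, be)"
    by (simp add: br_eval_replicate_C br_eval_replicate_B)
  moreover have "(phi ^^ (d - be)) ((phi ^^ be) z) = (phi ^^ d) z" if "be < d"
    using that funpow_add[of "d - be" be phi] by simp
  then have "br_eval phi (replicate d C) (g, (phi ^^ be) z, be) =
                   (g + max be d - be, (phi ^^ max be d) z, max be d - d)"
    by (simp add: br_eval_replicate_C max_def)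
  ultimately show ?thesis
    by (simp add: br_word_def br_eval_replicate_B)
qed

theorem mainTheorem14:
  fixes phi :: "'a::monoid_mult \<Rightarrow> 'a" and z :: 'a
    and \<beta> \<beta>' \<delta> \<delta>' :: nat
  assumes "monoid_endo phi"
    and "inj (\<lambda>n::nat. (phi ^^ n) z)"
  shows "(\<exists>\<alpha> \<alpha>' \<gamma> \<gamma>' :: nat.
            br_cong phi (br_word \<gamma> \<beta> z \<delta> \<alpha>) (br_word \<gamma>' \<beta>' z \<delta>' \<alpha>'))
         \<longleftrightarrow> max \<beta> \<delta> = max \<beta>' \<delta>'"
proof
  assume "\<exists>\<alpha> \<alpha>' \<gamma> \<gamma>'. br_cong phi (br_word \<gamma> \<beta> z \<delta> \<alpha>) (br_word \<gamma>' \<beta>' z \<delta>' \<alpha>')"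
  then have "(phi ^^ max \<beta> \<delta>) z = (phi ^^ max \<beta>' \<delta>') z"
    by (auto simp: br_cong_iff_br_eval_eq[OF assms(1)] br_eval_br_word[OF assms(1)])
  then show "max \<beta> \<delta> = max \<beta>' \<delta>'"
    using assms(2) by (meson injD)
next
  assume "max \<beta> \<delta> = max \<beta>' \<delta>'"
  then have "br_cong phi (br_word \<beta> \<beta> z \<delta> \<delta>) (br_word \<beta>' \<beta>' z \<delta>' \<delta>')"
    by (simp add: br_cong_iff_br_eval_eq[OF assms(1)] br_eval_br_word[OF assms(1)])
  then show "\<exists>\<alpha> \<alpha>' \<gamma> \<gamma>'. br_cong phi (br_word \<gamma> \<beta> z \<delta> \<alpha>) (br_word \<gamma>' \<beta>' z \<delta>' \<alpha>')"
    by blast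
qed

end
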